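(* Let $n_0, L\in\mathbb{N}_+$, $n_1,\dots,n_L\in\mathbb{N}_+$, and let $h_l\in\mathrm{RL}(n_{l-1},n_l)$ for $l=1,\dots,L$, with $\mathbf{h}=(h_1,\dots,h_L)$. Let $\gamma\in\Gamma$. Then $$|\mathcal{S}_{\mathbf{h}}|\le\big\|\varphi^{(\gamma)}_{n_L}\circ\dots\circ\varphi^{(\gamma)}_{n_1}({\rm e}_{n_0})\big\|_1 .$$
   Context: $\mathbb{N}=\{0,1,2,\dots\}$, $\mathbb{N}_+=\mathbb{N}\setminus\{0\}$, $\sigma(x)=\max(0,x)$. For $n,n'\in\mathbb{N}_+$, $\mathrm{RL}(n,n')$ is the set of maps $h:\mathbb{R}^n\to\mathbb{R}^{n'}$ of the form $h(x)_i=\sigma(\langle x,w_i\rangle+b_i)$, $i=1,\dots,n'$, for some matrix $W\in\mathbb{R}^{n'\times n}$ with rows $w_i$ and $b\in\mathbb{R}^{n'}$. The signature $S_h(x)\in\{0,1\}^{n'}$ has $S_h(x)_i=1$ iff $\langle x,w_i\rangle+b_i>0$; $\mathcal{S}_h=\{S_h(x):x\in\mathbb{R}^n\}$. By convention $\mathrm{RL}(0,n')$ consists of the constant maps $\{0\}\to\mathbb{R}^{n'}$, and for such $h$ one sets $\mathcal{H}_{n'}(\mathcal{S}_h)={\rm e}_0$. For $\mathbf{h}=(h_1,\dots,h_L)$ the multi signature of $x\in\mathbb{R}^{n_0}$ is $S_{\mathbf{h}}(x)=(S_{h_1}(x),S_{h_2}(h_1(x)),\dots,S_{h_L}(h_{L-1}\circ\dots\circ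 h_1(x)))$ and $\mathcal{S}_{\mathbf{h}}=\{S_{\mathbf{h}}(x):x\in\mathbb{R}^{n_0}\}$. For $s\in\{0,1\}^{k}$, $|s|=\sum_i s_i$. Histograms: $V$ is the set of sequences $v=(v_j)_{j\in\mathbb{N}}$ of elements of $\mathbb{N}$ with $\sum_j v_j<\infty$; $\|v\|_1=\sum_j v_j$; ${\rm e}_i\in V$ has $({\rm e}_i)_j=\delta_{ij}$. For $v,w\in V$, $v\preceq w$ iff $\sum_{j\ge J}v_j\le\sum_{j\ge J}w_j$ for all $J\in\mathbb{N}$. For a finite family $(v^{(i)})_{i\in I}$ in $V$, $\max_{i}(v^{(i)})\in V$ is defined by $\max_i(v^{(i)})_J=\max_i\sum_{j\ge J}v^{(i)}_j-\max_i\sum_{j\ge J+1}v^{(i)}_j$. For $\mathcal{S}\subseteq\{0,1\}^{n'}$, the activation histogram is $\mathcal{H}_{n'}(\mathcal{S})=(|\{s\in\mathcal{S}:|s|=j\}|)_{j\in\mathbb{N}}$. Bound condition: $\Gamma$ is the set of families $\gamma=(\gamma_{n,n'})_{n'\in\mathbb{N}_+,\,n\in\{0,\dots,n'\}}$ of elements of $V$ such that (i) $\max\{\mathcal{H}_{n'}(\mathcal{S}_h):h\in\mathrm{RL}(n,n')\}\preceq\gamma_{n,n'}$ for all $n'\in\mathbb{N}_+$, $n\in\{0,\dots,n'\}$, and (ii) $n\le\tilde n\le n'$ implies $\gamma_{n,n'}\preceq\gamma_{\tilde n,n'}$. Clipping: for $i^*\in\mathbb{N}$, $\mathrm{cl}_{i^*}:V\to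 V$, $\mathrm{cl}_{i^*}(v)_i=v_i$ for $i<i^*$, $=\sum_{j\ge i^*}v_j$ for $i=i^*$, $=0$ for $i>i^*$. Transition map: for $n'\in\mathbb{N}_+$, $\gamma\in\Gamma$, $\varphi^{(\gamma)}_{n'}:V\to V$, $\varphi^{(\gamma)}_{n'}(v)=\sum_{n=0}^\infty v_n\,\mathrm{cl}_{\min(n,n')}(\gamma_{\min(n,n'),n'})$. *)

theory Defs
  imports Complex_Main
begin

definition is_hist :: "(nat \<Rightarrow> nat) \<Rightarrow> bool" where
  "is_hist v \<longleftrightarrow> finite {j. v j \<noteq> 0}"

definition norm1 :: "(nat \<Rightarrow> nat) \<Rightarrow> nat" where
  "norm1 v = (\<Sum>j\<in>{j. v j \<noteq> 0}. v j)"

definition unit_hist :: "nat \<Rightarrow> nat \<Rightarrow> nat" ("e\<^sub>h") where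
  "unit_hist i = (\<lambda>j. if j = i then 1 else 0)"

definition tail :: "(nat \<Rightarrow> nat) \<Rightarrow> nat \<Rightarrow> nat" where
  "tail v J = (\<Sum>j\<in>{j. J \<le> j \<and> v j \<noteq> 0}. v j)"

definition hist_le :: "(nat \<Rightarrow> nat) \<Rightarrow> (nat \<Rightarrow> nat) \<Rightarrow> bool" where
  "hist_le v w \<longleftrightarrow> (\<forall>J. tail v J \<le> tail w J)"

text \<open>Maximum of a finite (nonempty) family of histograms, given as the set of its members.\<close>
definition hist_max :: "(nat \<Rightarrow> nat) set \<Rightarrow> nat \<Rightarrow> nat" where
  "hist_max A J = Max ((\<lambda>v. tail v J) ` A) - Max ((\<lambda>v. tail v (Suc J)) ` A)"

text \<open>Activation histogram of a set of signatures (signatures are bool lists;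
  the number of active entries is the number of True entries).\<close>
definition act_hist :: "bool list set \<Rightarrow> nat \<Rightarrow> nat" where
  "act_hist S j = card {s \<in> S. length (filter id s) = j}"

text \<open>Points of R^n are functions nat => real vanishing outside {0..<n}.
  A layer in RL(n,n') is given by weights W (row i, column j) and biases b;
  only entries with i < n', j < n matter.\<close>
definition Rn :: "nat \<Rightarrow> (nat \<Rightarrow> real) set" where
  "Rn n = {x. \<forall>i\<ge>n. x i = 0}"

definition preact :: "(nat \<Rightarrow> nat \<Rightarrow> real) \<Rightarrow> (nat \<Rightarrow> real) \<Rightarrow> nat \<Rightarrow> (nat \<Rightarrow> real) \<Rightarrow> nat \<Rightarrow> real" where
  "preact W b n x i = (\<Sum>j<n. W i j * x j) + b i"

definition relu_layer :: "(nat \<Rightarrow> nat \<Rightarrow> real) \<Rightarrow> (nat \<Rightarrow> real) \<Rightarrow> nat \<Rightarrow> nat \<Rightarrow> (nat \<Rightarrow> real) \<Rightarrow> (nat \<Rightarrow> real)" where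
  "relu_layer W b n n' x = (\<lambda>i. if i < n' then max 0 (preact W b n x i) else 0)"

definition signature :: "(nat \<Rightarrow> nat \<Rightarrow> real) \<Rightarrow> (nat \<Rightarrow> real) \<Rightarrow> nat \<Rightarrow> nat \<Rightarrow> (nat \<Rightarrow> real) \<Rightarrow> bool list" where
  "signature W b n n' x = map (\<lambda>i. preact W b n x i > 0) [0..<n']"

definition sig_set :: "(nat \<Rightarrow> nat \<Rightarrow> real) \<Rightarrow> (nat \<Rightarrow> real) \<Rightarrow> nat \<Rightarrow> nat \<Rightarrow> bool list set" where
  "sig_set W b n n' = signature W b n n' ` Rn n"

text \<open>The set of activation histograms of layers in RL(n,n'); for n = 0 the
  convention of the paper sets the histogram to e_0.\<close>
definition RL_hists :: "nat \<Rightarrow> nat \<Rightarrow> (nat \<Rightarrow> nat) set" where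
  "RL_hists n n' = (if n = 0 then {e\<^sub>h 0}
     else {act_hist (sig_set W b n n') | W b. True})"

definition in_Gamma :: "(nat \<Rightarrow> nat \<Rightarrow> nat \<Rightarrow> nat) \<Rightarrow> bool" where
  "in_Gamma \<gamma> \<longleftrightarrow>
     (\<forall>n' n. 1 \<le> n' \<and> n \<le> n' \<longrightarrow> is_hist (\<gamma> n n')) \<and>
     (\<forall>n' n. 1 \<le> n' \<and> n \<le> n' \<longrightarrow> hist_le (hist_max (RL_hists n n')) (\<gamma> n n')) \<and>
     (\<forall>n' n m. 1 \<le> n' \<and> n \<le> m \<and> m \<le> n' \<longrightarrow> hist_le (\<gamma> n n') (\<gamma> m n'))"

definition clip :: "nat \<Rightarrow> (nat \<Rightarrow> nat) \<Rightarrow> nat \<Rightarrow> nat" where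
  "clip i0 v = (\<lambda>i. if i < i0 then v i else if i = i0 then tail v i0 else 0)"

definition trans_map :: "(nat \<Rightarrow> nat \<Rightarrow> nat \<Rightarrow> nat) \<Rightarrow> nat \<Rightarrow> (nat \<Rightarrow> nat) \<Rightarrow> nat \<Rightarrow> nat" where
  "trans_map \<gamma> n' v = (\<lambda>k. \<Sum>n\<in>{n. v n \<noteq> 0}. v n * clip (min n n') (\<gamma> (min n n') n') k)"

text \<open>Layer l (1 <= l <= L) has weights Ws l, biases bs l and maps R^(ns (l-1)) to R^(ns l).\<close>
fun net_out :: "(nat \<Rightarrow> nat \<Rightarrow> nat \<Rightarrow> real) \<Rightarrow> (nat \<Rightarrow> nat \<Rightarrow> real) \<Rightarrow> (nat \<Rightarrow> nat) \<Rightarrow> nat \<Rightarrow> (nat \<Rightarrow> real) \<Rightarrow> (nat \<Rightarrow> real)" where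
  "net_out Ws bs ns 0 x = x"
| "net_out Ws bs ns (Suc k) x = relu_layer (Ws (Suc k)) (bs (Suc k)) (ns k) (ns (Suc k)) (net_out Ws bs ns k x)"

definition multi_sig :: "(nat \<Rightarrow> nat \<Rightarrow> nat \<Rightarrow> real) \<Rightarrow> (nat \<Rightarrow> nat \<Rightarrow> real) \<Rightarrow> (nat \<Rightarrow> nat) \<Rightarrow> nat \<Rightarrow> (nat \<Rightarrow> real) \<Rightarrow> bool list list" where
  "multi_sig Ws bs ns L x = map (\<lambda>l. signature (Ws l) (bs l) (ns (l - 1)) (ns l) (net_out Ws bs ns (l - 1) x)) [1..<Suc L]"

definition multi_sig_set :: "(nat \<Rightarrow> nat \<Rightarrow> nat \<Rightarrow> real) \<Rightarrow> (nat \<Rightarrow> nat \<Rightarrow> real) \<Rightarrow> (nat \<Rightarrow> nat) \<Rightarrow> nat \<Rightarrow> bool list list set" where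
  "multi_sig_set Ws bs ns L = multi_sig Ws bs ns L ` Rn (ns 0)"

fun trans_iter :: "(nat \<Rightarrow> nat \<Rightarrow> nat \<Rightarrow> nat) \<Rightarrow> (nat \<Rightarrow> nat) \<Rightarrow> nat \<Rightarrow> nat \<Rightarrow> nat" where
  "trans_iter \<gamma> ns 0 = e\<^sub>h (ns 0)"
| "trans_iter \<gamma> ns (Suc k) = trans_map \<gamma> (ns (Suc k)) (trans_iter \<gamma> ns k)"

end

theory Submission
  imports Defs
begin

text \<open>On the inputs sharing a multi-signature \<open>s\<close> of the first \<open>l\<close> layers the network
  is affine, and since inactive neurons output \<open>0\<close> its image lies in an affine space of
  dimension \<open>d(s) = min(n_0, |s_1|, ..., |s_l|)\<close>. Restricted to that region, the next layer of
  width \<open>n'\<close> acts like a layer in \<open>RL(min(d(s), n'), n')\<close>, so by the bound condition its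
  signatures with at least \<open>J \<le> d(s)\<close> active neurons are counted by the \<open>J\<close>-th tail of \<open>\<gamma>\<close>.
  Summing over the regions by a layer-cake argument, which needs \<open>\<gamma>\<close> to be monotone in its first
  index, shows by induction on \<open>l\<close> that every tail of the histogram of \<open>d(s)\<close> is bounded by the
  same tail of \<open>\<phi>_{n_l} \<circ> ... \<circ> \<phi>_{n_1} (e_{n_0})\<close>. The tail at \<open>0\<close> is the claim.\<close>

section \<open>Tails of histograms\<close>

lemma tail_eq_sum_atLeastAtMost:
  assumes "\<forall>j>B. v j = 0"
  shows "tail v J = (\<Sum>j=J..B. v j)"
  unfolding tail_def
proof (rule sum.mono_neutral_left)
  show "{j. J \<le> j \<and> v j \<noteq> 0} \<subseteq> {J..B}"
    using assms by (auto simp: not_less[symmetric])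
qed auto

lemma norm1_eq_tail_0: "norm1 v = tail v 0"
  by (simp add: norm1_def tail_def)

lemma is_histI: "\<forall>j>B. v j = 0 \<Longrightarrow> is_hist v"
  unfolding is_hist_def by (rule finite_subset[of _ "{..B}"]) (auto simp: not_less[symmetric])

lemma is_histE:
  assumes "is_hist v"
  obtains B where "\<forall>j>B. v j = 0"
  using assms finite_nat_set_iff_bounded_le[of "{j. v j \<noteq> 0}"]
  unfolding is_hist_def by (metis (mono_tags) leD mem_Collect_eq)

lemma tail_unit_hist: "tail (e\<^sub>h i) J = (if J \<le> i then 1 else 0)"
proof -
  have "{j. J \<le> j \<and> e\<^sub>h i j \<noteq> 0} = (if J \<le> i then {i} else {})"
    by (auto simp: unit_hist_def)
  then show ?thesis by (simp add: tail_def unit_hist_def)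
qed

lemma tail_eq_Suc:
  assumes "\<forall>j>B. v j = 0"
  shows "tail v J = v J + tail v (Suc J)"
proof -
  have v: "\<forall>j>max B J. v j = 0" using assms by simp
  show ?thesis
    unfolding tail_eq_sum_atLeastAtMost[OF v] by (simp add: sum.atLeast_Suc_atMost)
qed

lemma tail_Suc_le: "\<forall>j>B. v j = 0 \<Longrightarrow> tail v (Suc J) \<le> tail v J"
  using tail_eq_Suc by (metis le_add2)

lemma tail_clip:
  assumes "\<forall>j>B. v j = 0"
  shows "tail (clip m v) J = (if J \<le> m then tail v J else 0)"
proof -
  have clip: "\<forall>j>m. clip m v j = 0" by (simp add: clip_def)
  have "tail (clip m v) J = tail v J" if "J \<le> m" for J
    using that
  proof (induction "m - J" arbitrary: J)
    case 0
    then have "J = m" by simp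
    then show ?case
      using tail_eq_Suc[OF clip, of m] tail_eq_sum_atLeastAtMost[OF clip, of "Suc m"]
      by (simp add: clip_def)
  next
    case (Suc k)
    then have "J < m" "k = m - Suc J" by auto
    then show ?case
      using Suc.hyps(1)[of "Suc J"] tail_eq_Suc[OF clip, of J] tail_eq_Suc[OF assms, of J]
      by (simp add: clip_def)
  qed
  then show ?thesis
    using tail_eq_sum_atLeastAtMost[OF clip, of J] by (cases "J \<le> m") simp_all
qed

lemma tail_hist_max:
  assumes "finite A" "A \<noteq> {}" "\<forall>w\<in>A. \<forall>j>B. w j = 0"
  shows "tail (hist_max A) J = Max ((\<lambda>w. tail w J) ` A)"
proof -
  define M where "M j = Max ((\<lambda>w. tail w j) ` A)" for j
  have M_ge: "tail w j \<le> M j" if "w \<in> A" for w j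
    unfolding M_def using assms(1) that by (intro Max_ge) auto
  have M_Suc_le: "M (Suc j) \<le> M j" for j
  proof -
    have "tail w (Suc j) \<le> M j" if "w \<in> A" for w
      using tail_Suc_le[of B w j] assms(3) that M_ge[OF that, of j] by simp
    then show ?thesis using assms(1,2) unfolding M_def by (subst Max_le_iff) auto
  qed
  have M_0: "M j = 0" if "j > B" for j
  proof -
    have "tail w j = 0" if "w \<in> A" for w
      using tail_eq_sum_atLeastAtMost[of B w j] assms(3) that \<open>j > B\<close> by simp
    then have "(\<lambda>w. tail w j) ` A = {0}"
      using assms(2) by force
    then show ?thesis unfolding M_def by simp
  qed
  have hm: "hist_max A j = M j - M (Suc j)" for j
    unfolding hist_max_def M_def ..
  have hm_0: "\<forall>j>B. hist_max A j = 0" using hm M_0 by simp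
  have "tail (hist_max A) J = M J"
  proof (induction "Suc B - J" arbitrary: J)
    case 0
    then show ?case using M_0 tail_eq_sum_atLeastAtMost[OF hm_0, of J] by simp
  next
    case (Suc k)
    then have "k = Suc B - Suc J" by simp
    have "tail (hist_max A) J = hist_max A J + tail (hist_max A) (Suc J)"
      by (rule tail_eq_Suc[OF hm_0])
    also have "\<dots> = (M J - M (Suc J)) + M (Suc J)"
      using Suc.hyps(1)[OF \<open>k = Suc B - Suc J\<close>] hm by simp
    finally show ?case using M_Suc_le[of J] by simp
  qed
  then show ?thesis unfolding M_def .
qed

lemma tail_act_hist:
  assumes "finite S" "\<forall>s\<in>S. length s \<le> N"
  shows "tail (act_hist S) J = card {s\<in>S. J \<le> length (filter id s)}"
proof -
  let ?level = "\<lambda>j. {s\<in>S. length (filter id s) = j}"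
  have active_le: "length (filter id s) \<le> N" if "s \<in> S" for s
    using assms(2) that length_filter_le order_trans by blast
  have "\<forall>j>N. act_hist S j = 0"
  proof (intro allI impI)
    fix j assume "N < j"
    then have "?level j = {}" using active_le by fastforce
    then show "act_hist S j = 0" by (simp only: act_hist_def card.empty)
  qed
  then have "tail (act_hist S) J = (\<Sum>j=J..N. card (?level j))"
    by (simp add: tail_eq_sum_atLeastAtMost act_hist_def)
  also have "\<dots> = card (\<Union>j\<in>{J..N}. ?level j)"
    using assms(1) by (intro card_UN_disjoint[symmetric]) auto
  also have "(\<Union>j\<in>{J..N}. ?level j) = {s\<in>S. J \<le> length (filter id s)}"
    using active_le by auto
  finally show ?thesis .
qed

lemma trans_map_eq_0: "n' < j \<Longrightarrow> trans_map \<gamma> n' v j = 0"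
  by (auto simp: trans_map_def clip_def min_le_iff_disj intro!: sum.neutral)

lemma tail_trans_map:
  assumes "is_hist v"
  shows "tail (trans_map \<gamma> n' v) J =
    (\<Sum>k | v k \<noteq> 0. v k * tail (clip (min k n') (\<gamma> (min k n') n')) J)"
proof -
  have clip_0: "\<forall>j>n'. clip (min k n') w j = 0" for k w by (simp add: clip_def)
  have "tail (trans_map \<gamma> n' v) J = (\<Sum>j=J..n'. trans_map \<gamma> n' v j)"
    using trans_map_eq_0 by (intro tail_eq_sum_atLeastAtMost) blast
  also have "\<dots> = (\<Sum>k | v k \<noteq> 0. v k * (\<Sum>j=J..n'. clip (min k n') (\<gamma> (min k n') n') j))"
    unfolding trans_map_def by (subst sum.swap) (simp add: sum_distrib_left)
  also have "\<dots> = (\<Sum>k | v k \<noteq> 0. v k * tail (clip (min k n') (\<gamma> (min k n') n')) J)"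
    using tail_eq_sum_atLeastAtMost[OF clip_0] by simp
  finally show ?thesis .
qed

lemma sum_of_bool_less_eq: "a \<le> M \<Longrightarrow> (\<Sum>c<M. of_bool (c < a)) = (a::nat)"
proof -
  assume "a \<le> M"
  then have "{..<M} \<inter> {c. c < a} = {..<a}" by auto
  then show ?thesis by simp
qed

text \<open>A layer-cake argument: writing \<open>g a = #{c < M. c < g a}\<close>, monotonicity of \<open>g\<close>
  makes every level set \<open>{k. c < g k}\<close> a final segment \<open>{J..}\<close>, on which the hypothesis applies.\<close>
lemma sum_mono_comp_le_of_tail_le:
  fixes d :: "'a \<Rightarrow> nat" and g :: "nat \<Rightarrow> nat"
  assumes "finite S" "is_hist w" "mono g"
    and tail_le: "\<And>J. card {s\<in>S. J \<le> d s} \<le> tail w J"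
  shows "(\<Sum>s\<in>S. g (d s)) \<le> (\<Sum>k | w k \<noteq> 0. w k * g k)"
proof -
  define K where "K = {k. w k \<noteq> 0}"
  have "finite K" using assms(2) by (simp add: K_def is_hist_def)
  obtain M where M: "\<forall>a\<in>d ` S \<union> K. g a \<le> M"
    using \<open>finite K\<close> assms(1) finite_nat_set_iff_bounded_le[of "g ` (d ` S \<union> K)"] by auto
  have M_S: "g (d s) \<le> M" if "s \<in> S" for s
    using M that by auto
  have M_K: "g k \<le> M" if "k \<in> K" for k
    using M that by auto
  have level: "card {s\<in>S. c < g (d s)} \<le> (\<Sum>k\<in>{k\<in>K. c < g k}. w k)" for c
  proof (cases "\<exists>k. c < g k")
    case True
    define J where "J = (LEAST k. c < g k)"
    have "c < g k \<longleftrightarrow> J \<le> k" for k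
      using LeastI_ex[OF True] Least_le[of "\<lambda>k. c < g k"] monoD[OF assms(3), of J k]
      unfolding J_def[symmetric] by (meson le_trans not_le)
    moreover have "tail w J = (\<Sum>k\<in>{k\<in>K. J \<le> k}. w k)"
      unfolding tail_def K_def by (rule sum.cong) auto
    ultimately show ?thesis using tail_le[of J] by simp
  qed simp
  have "(\<Sum>s\<in>S. g (d s)) = (\<Sum>s\<in>S. \<Sum>c<M. of_bool (c < g (d s)))"
    using M_S by (intro sum.cong refl) (subst sum_of_bool_less_eq, simp_all)
  also have "\<dots> = (\<Sum>c<M. card {s\<in>S. c < g (d s)})"
    using assms(1) by (subst sum.swap) (simp add: Int_def)
  also have "\<dots> \<le> (\<Sum>c<M. \<Sum>k\<in>{k\<in>K. c < g k}. w k)"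
    by (intro sum_mono level)
  also have "\<dots> = (\<Sum>k\<in>K. \<Sum>c<M. w k * of_bool (c < g k))"
    using \<open>finite K\<close> by (subst sum.swap) (simp add: Int_def)
  also have "\<dots> = (\<Sum>k\<in>K. w k * (\<Sum>c<M. of_bool (c < g k)))"
    by (simp only: sum_distrib_left)
  also have "\<dots> = (\<Sum>k\<in>K. w k * g k)"
    using M_K by (intro sum.cong refl) (subst sum_of_bool_less_eq, simp_all)
  finally show ?thesis unfolding K_def .
qed

section \<open>Affine families of points\<close>

definition affine_dim_le :: "'a set \<Rightarrow> ('a \<Rightarrow> nat \<Rightarrow> real) \<Rightarrow> nat \<Rightarrow> nat \<Rightarrow> bool" where
  "affine_dim_le S F d N \<longleftrightarrow>
     (\<exists>c u. \<forall>x\<in>S. \<exists>\<tau>. \<forall>j<N. F x j = c j + (\<Sum>i<d. \<tau> i * u i j))"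

lemma affine_dim_le_empty: "affine_dim_le {} F d N"
  by (simp add: affine_dim_le_def)

lemma affine_dim_le_subset: "affine_dim_le S F d N \<Longrightarrow> T \<subseteq> S \<Longrightarrow> affine_dim_le T F d N"
  unfolding affine_dim_le_def by blast

lemma affine_dim_le_mono:
  assumes "affine_dim_le S F d N" "d \<le> d'"
  shows "affine_dim_le S F d' N"
proof -
  obtain c u where cu: "\<forall>x\<in>S. \<exists>\<tau>. \<forall>j<N. F x j = c j + (\<Sum>i<d. \<tau> i * u i j)"
    using assms(1) unfolding affine_dim_le_def by blast
  have "\<exists>\<tau>'. \<forall>j<N. F x j = c j + (\<Sum>i<d'. \<tau>' i * u i j)" if "x \<in> S" for x
  proof -
    obtain \<tau> where \<tau>: "\<forall>j<N. F x j = c j + (\<Sum>i<d. \<tau> i * u i j)"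
      using cu \<open>x \<in> S\<close> by blast
    have "(\<Sum>i<d'. (if i < d then \<tau> i else 0) * u i j) = (\<Sum>i<d. \<tau> i * u i j)" for j
    proof -
      have "(\<Sum>i<d'. (if i < d then \<tau> i else 0) * u i j)
          = (\<Sum>i<d. (if i < d then \<tau> i else 0) * u i j)"
        using assms(2) by (intro sum.mono_neutral_right) auto
      also have "\<dots> = (\<Sum>i<d. \<tau> i * u i j)"
        by (rule sum.cong) auto
      finally show ?thesis .
    qed
    then show ?thesis using \<tau> by (intro exI[of _ "\<lambda>i. if i < d then \<tau> i else 0"]) simp
  qed
  then show ?thesis unfolding affine_dim_le_def by blast
qed

lemma affine_dim_le_min:
  "affine_dim_le S F d N \<Longrightarrow> affine_dim_le S F d' N \<Longrightarrow> affine_dim_le S F (min d d') N"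
  by (simp add: min_def)

lemma affine_dim_le_card_support:
  assumes "finite A" and vanish: "\<And>x j. x \<in> S \<Longrightarrow> j < N \<Longrightarrow> j \<notin> A \<Longrightarrow> F x j = 0"
  shows "affine_dim_le S F (card A) N"
proof -
  obtain e where e: "bij_betw e {..<card A} A"
    using ex_bij_betw_nat_finite[OF assms(1)] by (auto simp: atLeast0LessThan)
  have "\<exists>\<tau>. \<forall>j<N. F x j = 0 + (\<Sum>i<card A. \<tau> i * of_bool (j = e i))" if "x \<in> S" for x
  proof (intro exI[of _ "\<lambda>i. F x (e i)"] allI impI)
    fix j assume "j < N"
    have "(\<Sum>i<card A. F x (e i) * of_bool (j = e i)) = (\<Sum>a\<in>A. F x a * of_bool (j = a))"
      using sum.reindex_bij_betw[OF e, of "\<lambda>a. F x a * of_bool (j = a)"] .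
    also have "\<dots> = (\<Sum>a\<in>A. if j = a then F x a else 0)"
      by (rule sum.cong) auto
    also have "\<dots> = F x j"
      using sum.delta'[OF assms(1), of j "F x"] vanish[OF \<open>x \<in> S\<close> \<open>j < N\<close>]
      by (cases "j \<in> A") simp_all
    finally show "F x j = 0 + (\<Sum>i<card A. F x (e i) * of_bool (j = e i))" by simp
  qed
  then show ?thesis
    unfolding affine_dim_le_def by (intro exI[of _ "\<lambda>_. 0"] exI[of _ "\<lambda>i j. of_bool (j = e i)"]) blast
qed

lemma affine_dim_le_coordinates: "affine_dim_le S F N N"
  using affine_dim_le_card_support[of "{..<N}" S N F] by simp

lemma affine_dim_le_preact:
  assumes "affine_dim_le S G d n"
  shows "affine_dim_le S (\<lambda>x. preact W b n (G x)) d N"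
proof -
  obtain c u where cu: "\<forall>x\<in>S. \<exists>\<tau>. \<forall>k<n. G x k = c k + (\<Sum>i<d. \<tau> i * u i k)"
    using assms unfolding affine_dim_le_def by blast
  define c' where "c' j = (\<Sum>k<n. W j k * c k) + b j" for j
  define u' where "u' i j = (\<Sum>k<n. W j k * u i k)" for i j
  have "\<exists>\<tau>. \<forall>j<N. preact W b n (G x) j = c' j + (\<Sum>i<d. \<tau> i * u' i j)" if "x \<in> S" for x
  proof -
    obtain \<tau> where \<tau>: "\<forall>k<n. G x k = c k + (\<Sum>i<d. \<tau> i * u i k)"
      using cu \<open>x \<in> S\<close> by blast
    have "preact W b n (G x) j = c' j + (\<Sum>i<d. \<tau> i * u' i j)" for j
    proof -
      have "preact W b n (G x) j = (\<Sum>k<n. W j k * (c k + (\<Sum>i<d. \<tau> i * u i k))) + b j"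
        unfolding preact_def using \<tau> by simp
      also have "\<dots> = c' j + (\<Sum>k<n. \<Sum>i<d. \<tau> i * (W j k * u i k))"
        by (simp add: c'_def distrib_left sum.distrib sum_distrib_left mult.left_commute)
      also have "\<dots> = c' j + (\<Sum>i<d. \<tau> i * u' i j)"
        unfolding u'_def by (subst sum.swap) (simp add: sum_distrib_left)
      finally show ?thesis .
    qed
    then show ?thesis by blast
  qed
  then show ?thesis unfolding affine_dim_le_def by blast
qed

lemma relu_layer_eq_if_signature:
  "j < N \<Longrightarrow> relu_layer W b n N y j = (if signature W b n N y ! j then preact W b n y j else 0)"
  by (simp add: relu_layer_def signature_def)

lemma affine_dim_le_relu_layer:
  assumes "affine_dim_le S G d n" "\<forall>x\<in>S. signature W b n N (G x) = t"
  shows "affine_dim_le S (\<lambda>x. relu_layer W b n N (G x)) d N"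
proof -
  obtain c u where cu: "\<forall>x\<in>S. \<exists>\<tau>. \<forall>j<N. preact W b n (G x) j = c j + (\<Sum>i<d. \<tau> i * u i j)"
    using affine_dim_le_preact[OF assms(1)] unfolding affine_dim_le_def by blast
  have "\<exists>\<tau>. \<forall>j<N. relu_layer W b n N (G x) j
      = (if t ! j then c j else 0) + (\<Sum>i<d. \<tau> i * (if t ! j then u i j else 0))"
    if "x \<in> S" for x
  proof -
    obtain \<tau> where \<tau>: "\<forall>j<N. preact W b n (G x) j = c j + (\<Sum>i<d. \<tau> i * u i j)"
      using cu \<open>x \<in> S\<close> by blast
    have "relu_layer W b n N (G x) j
        = (if t ! j then c j else 0) + (\<Sum>i<d. \<tau> i * (if t ! j then u i j else 0))" if "j < N" for j
      using \<tau> that assms(2) \<open>x \<in> S\<close> relu_layer_eq_if_signature[OF that, of W b n "G x"] by simp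
    then show ?thesis by blast
  qed
  then show ?thesis
    unfolding affine_dim_le_def
    by (intro exI[of _ "\<lambda>j. if t ! j then c j else 0"] exI[of _ "\<lambda>i j. if t ! j then u i j else 0"])
      blast
qed

lemma affine_dim_le_relu_layer_active:
  assumes "\<forall>x\<in>S. signature W b n N (G x) = t"
  shows "affine_dim_le S (\<lambda>x. relu_layer W b n N (G x)) (length (filter id t)) N"
proof (cases "S = {}")
  case False
  then have "length t = N" using assms by (auto simp: signature_def)
  then have "length (filter id t) = card {j. j < N \<and> t ! j}"
    by (simp add: length_filter_conv_card)
  moreover have "affine_dim_le S (\<lambda>x. relu_layer W b n N (G x)) (card {j. j < N \<and> t ! j}) N"
  proof (rule affine_dim_le_card_support)
    fix x j assume "x \<in> S" "j < N" "j \<notin> {j. j < N \<and> t ! j}"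
    then show "relu_layer W b n N (G x) j = 0"
      using assms relu_layer_eq_if_signature[of j N W b n "G x"] by simp
  qed simp
  ultimately show ?thesis by simp
qed (simp add: affine_dim_le_empty)

section \<open>Signatures of a layer on an affine family\<close>

lemma length_signature [simp]: "length (signature W b n N y) = N"
  by (simp add: signature_def)

lemma length_filter_signature_le: "length (filter P (signature W b n N y)) \<le> N"
  using length_filter_le length_signature by metis

lemma finite_signature_image: "finite (signature W b n N ` X)"
  by (rule finite_subset[of _ "{t. length t = N}"])
     (auto simp: finite_lists_length_eq[of "UNIV :: bool set", simplified])

lemma Rn_0: "Rn 0 = {\<lambda>_. 0}"
  unfolding Rn_def by (auto simp: fun_eq_iff)

lemma signature_image_subset_sig_set:
  assumes "affine_dim_le R (\<lambda>x. preact W b n (G x)) m N"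
  obtains W' c where "(\<lambda>x. signature W b n N (G x)) ` R \<subseteq> sig_set W' c m N"
proof -
  obtain c u where cu: "\<forall>x\<in>R. \<exists>\<tau>. \<forall>j<N. preact W b n (G x) j = c j + (\<Sum>i<m. \<tau> i * u i j)"
    using assms unfolding affine_dim_le_def by blast
  define W' where "W' j i = u i j" for j i
  have "signature W b n N (G x) \<in> sig_set W' c m N" if "x \<in> R" for x
  proof -
    obtain \<tau> where \<tau>: "\<forall>j<N. preact W b n (G x) j = c j + (\<Sum>i<m. \<tau> i * u i j)"
      using cu \<open>x \<in> R\<close> by blast
    define \<tau>' where "\<tau>' i = (if i < m then \<tau> i else 0)" for i
    have "preact W' c m \<tau>' j = preact W b n (G x) j" if "j < N" for j
      using \<tau> that by (simp add: preact_def W'_def \<tau>'_def mult.commute)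
    then have "signature W b n N (G x) = signature W' c m N \<tau>'"
      by (simp add: signature_def)
    moreover have "\<tau>' \<in> Rn m" by (simp add: Rn_def \<tau>'_def)
    ultimately show ?thesis unfolding sig_set_def by blast
  qed
  then show thesis using that by blast
qed

lemma sig_set_subset_lists: "sig_set W b m N \<subseteq> {t. length t = N}"
  by (auto simp: sig_set_def)

lemma RL_hists_cases:
  assumes "v \<in> RL_hists m N"
  obtains "v = e\<^sub>h 0" | W b where "v = act_hist (sig_set W b m N)"
  using assms by (auto simp: RL_hists_def split: if_splits)

lemma RL_hists_vanish:
  assumes "v \<in> RL_hists m N" "N < j"
  shows "v j = 0"
  using assms(1)
proof (cases rule: RL_hists_cases)
  case (2 W b)
  have "length (filter id t) \<le> N" if "t \<in> sig_set W b m N" for t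
    using that length_filter_signature_le by (auto simp: sig_set_def)
  then have "{t \<in> sig_set W b m N. length (filter id t) = j} = {}"
    using assms(2) by fastforce
  then show ?thesis by (simp only: 2 act_hist_def card.empty)
qed (use assms(2) in \<open>simp add: unit_hist_def\<close>)

lemma finite_RL_hists: "finite (RL_hists m N)"
proof (rule finite_subset)
  show "RL_hists m N \<subseteq> insert (e\<^sub>h 0) (act_hist ` Pow {t. length t = N})"
    using sig_set_subset_lists by (auto elim: RL_hists_cases)
  show "finite (insert (e\<^sub>h 0) (act_hist ` Pow {t. length t = N}))"
    using finite_lists_length_eq[of "UNIV :: bool set"] by simp
qed

lemma tail_clip_Gamma:
  assumes "in_Gamma \<gamma>" "1 \<le> N" "m \<le> N"
  shows "tail (clip m (\<gamma> m N)) J = (if J \<le> m then tail (\<gamma> m N) J else 0)"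
proof -
  have "is_hist (\<gamma> m N)"
    using assms by (simp add: in_Gamma_def)
  then obtain B where "\<forall>j>B. \<gamma> m N j = 0"
    by (rule is_histE)
  then show ?thesis by (rule tail_clip)
qed

lemma card_sig_set_active_le_Gamma:
  assumes "in_Gamma \<gamma>" "1 \<le> N" "J \<le> m" "m \<le> N"
  shows "card {t \<in> sig_set W c m N. J \<le> length (filter id t)} \<le> tail (\<gamma> m N) J"
proof -
  have "\<exists>v\<in>RL_hists m N. card {t \<in> sig_set W c m N. J \<le> length (filter id t)} \<le> tail v J"
  proof (cases "m = 0")
    case True
    \<comment> \<open>Here \<open>J = 0\<close> is needed: the convention \<open>RL_hists 0 N = {e\<^sub>h 0}\<close> ignores how many
      neurons of the single signature are active.\<close>
    then have "sig_set W c m N = {signature W c 0 N (\<lambda>_. 0)}"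
      by (simp add: sig_set_def Rn_0)
    then have "card {t \<in> sig_set W c m N. J \<le> length (filter id t)} \<le> card (sig_set W c m N)"
      by (intro card_mono) auto
    then have "card {t \<in> sig_set W c m N. J \<le> length (filter id t)} \<le> 1"
      using \<open>sig_set W c m N = _\<close> by simp
    then show ?thesis
      using True \<open>J \<le> m\<close> by (simp add: RL_hists_def tail_unit_hist)
  next
    case False
    have "card {t \<in> sig_set W c m N. J \<le> length (filter id t)} = tail (act_hist (sig_set W c m N)) J"
      by (rule tail_act_hist[symmetric]) (auto simp: sig_set_def finite_signature_image)
    then show ?thesis
      using False unfolding RL_hists_def by auto
  qed
  then obtain v where v: "v \<in> RL_hists m N"
    and le: "card {t \<in> sig_set W c m N. J \<le> length (filter id t)} \<le> tail v J"
    by blast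
  note le
  also have "tail v J \<le> tail (hist_max (RL_hists m N)) J"
    using finite_RL_hists v RL_hists_vanish by (subst tail_hist_max[where B=N]) auto
  also have "\<dots> \<le> tail (\<gamma> m N) J"
    using assms unfolding in_Gamma_def hist_le_def by auto
  finally show ?thesis .
qed

text \<open>This is where the clipping in the transition map comes from: the region of a child
  signature \<open>t\<close> has dimension at most \<open>min d |t|\<close>.\<close>
lemma card_signature_image_le_tail_clip:
  assumes "in_Gamma \<gamma>" "1 \<le> N" "affine_dim_le R G d n"
  shows "card {t \<in> (\<lambda>x. signature W b n N (G x)) ` R. J \<le> min d (length (filter id t))}
    \<le> tail (clip (min d N) (\<gamma> (min d N) N)) J"
proof -
  define m where "m = min d N"
  have "affine_dim_le R (\<lambda>x. preact W b n (G x)) m N"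
    unfolding m_def using assms(3)
    by (intro affine_dim_le_min affine_dim_le_preact affine_dim_le_coordinates)
  then obtain W' c where sub: "(\<lambda>x. signature W b n N (G x)) ` R \<subseteq> sig_set W' c m N"
    by (rule signature_image_subset_sig_set)
  have clip: "tail (clip m (\<gamma> m N)) J = (if J \<le> m then tail (\<gamma> m N) J else 0)"
    using assms(1,2) by (rule tail_clip_Gamma) (simp add: m_def)
  have "card {t \<in> (\<lambda>x. signature W b n N (G x)) ` R. J \<le> min d (length (filter id t))}
    \<le> (if J \<le> m then tail (\<gamma> m N) J else 0)"
  proof (cases "J \<le> m")
    case True
    have "card {t \<in> (\<lambda>x. signature W b n N (G x)) ` R. J \<le> min d (length (filter id t))}
        \<le> card {t \<in> sig_set W' c m N. J \<le> length (filter id t)}"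
      using sub by (intro card_mono) (auto simp: sig_set_def finite_signature_image)
    also have "\<dots> \<le> tail (\<gamma> m N) J"
      using assms(1,2) True by (intro card_sig_set_active_le_Gamma) (auto simp: m_def)
    finally show ?thesis
      using True by simp
  next
    case False
    have "\<not> J \<le> min d (length (filter id t))" if "t \<in> (\<lambda>x. signature W b n N (G x)) ` R" for t
    proof -
      from that obtain x where "t = signature W b n N (G x)" by blast
      then have "length (filter id t) \<le> N" by (simp add: length_filter_signature_le)
      then show ?thesis using False unfolding m_def by linarith
    qed
    then have "{t \<in> (\<lambda>x. signature W b n N (G x)) ` R. J \<le> min d (length (filter id t))} = {}"
      by blast
    then show ?thesis by (simp only: card.empty zero_le)
  qed
  then show ?thesis
    unfolding m_def[symmetric] clip .
qed

section \<open>Regions of a network\<close>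

definition sig_region :: "(nat \<Rightarrow> nat \<Rightarrow> nat \<Rightarrow> real) \<Rightarrow> (nat \<Rightarrow> nat \<Rightarrow> real) \<Rightarrow> (nat \<Rightarrow> nat)
    \<Rightarrow> nat \<Rightarrow> bool list list \<Rightarrow> (nat \<Rightarrow> real) set" where
  "sig_region Ws bs ns l s = {x \<in> Rn (ns 0). multi_sig Ws bs ns l x = s}"

definition next_sig :: "(nat \<Rightarrow> nat \<Rightarrow> nat \<Rightarrow> real) \<Rightarrow> (nat \<Rightarrow> nat \<Rightarrow> real) \<Rightarrow> (nat \<Rightarrow> nat)
    \<Rightarrow> nat \<Rightarrow> (nat \<Rightarrow> real) \<Rightarrow> bool list" where
  "next_sig Ws bs ns l x = signature (Ws (Suc l)) (bs (Suc l)) (ns l) (ns (Suc l)) (net_out Ws bs ns l x)"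

definition region_dim :: "nat \<Rightarrow> bool list list \<Rightarrow> nat" where
  "region_dim n0 s = foldl (\<lambda>d t. min d (length (filter id t))) n0 s"

lemma region_dim_Nil [simp]: "region_dim n0 [] = n0"
  by (simp add: region_dim_def)

lemma region_dim_snoc [simp]: "region_dim n0 (s @ [t]) = min (region_dim n0 s) (length (filter id t))"
  by (simp add: region_dim_def)

lemma multi_sig_0 [simp]: "multi_sig Ws bs ns 0 x = []"
  by (simp add: multi_sig_def)

lemma multi_sig_Suc: "multi_sig Ws bs ns (Suc l) x = multi_sig Ws bs ns l x @ [next_sig Ws bs ns l x]"
  by (simp add: multi_sig_def next_sig_def)

lemma affine_dim_le_sig_region:
  "affine_dim_le (sig_region Ws bs ns l s) (net_out Ws bs ns l) (region_dim (ns 0) s) (ns l)"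
proof (induction l arbitrary: s)
  case 0
  show ?case
  proof (cases "s = []")
    case True
    then show ?thesis by (simp add: affine_dim_le_coordinates)
  next
    case False
    then have "sig_region Ws bs ns 0 s = {}" by (simp add: sig_region_def)
    then show ?thesis by (simp add: affine_dim_le_empty)
  qed
next
  case (Suc l)
  show ?case
  proof (cases "sig_region Ws bs ns (Suc l) s = {}")
    case False
    then obtain x0 where "x0 \<in> sig_region Ws bs ns (Suc l) s" by blast
    define s0 where "s0 = multi_sig Ws bs ns l x0"
    define t where "t = next_sig Ws bs ns l x0"
    have s: "s = s0 @ [t]"
      using \<open>x0 \<in> _\<close> by (simp add: sig_region_def multi_sig_Suc s0_def t_def)
    then have region: "sig_region Ws bs ns (Suc l) s
        = {x \<in> sig_region Ws bs ns l s0. next_sig Ws bs ns l x = t}"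
      by (auto simp: sig_region_def multi_sig_Suc)
    let ?relu = "relu_layer (Ws (Suc l)) (bs (Suc l)) (ns l) (ns (Suc l))"
    have out: "net_out Ws bs ns (Suc l) = (\<lambda>x. ?relu (net_out Ws bs ns l x))"
      by auto
    have sig: "\<forall>x\<in>sig_region Ws bs ns (Suc l) s.
        signature (Ws (Suc l)) (bs (Suc l)) (ns l) (ns (Suc l)) (net_out Ws bs ns l x) = t"
      by (simp add: region next_sig_def)
    have "affine_dim_le (sig_region Ws bs ns (Suc l) s) (net_out Ws bs ns l) (region_dim (ns 0) s0) (ns l)"
      using Suc.IH by (rule affine_dim_le_subset) (simp add: region)
    then have "affine_dim_le (sig_region Ws bs ns (Suc l) s) (net_out Ws bs ns (Suc l))
        (region_dim (ns 0) s0) (ns (Suc l))"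
      unfolding out using sig by (rule affine_dim_le_relu_layer)
    moreover have "affine_dim_le (sig_region Ws bs ns (Suc l) s) (net_out Ws bs ns (Suc l))
        (length (filter id t)) (ns (Suc l))"
      unfolding out using sig by (rule affine_dim_le_relu_layer_active)
    ultimately show ?thesis
      unfolding s region_dim_snoc by (rule affine_dim_le_min)
  qed (simp add: affine_dim_le_empty)
qed

lemma multi_sig_set_0: "multi_sig_set Ws bs ns 0 = {[]}"
  by (auto simp: multi_sig_set_def Rn_def)

lemma multi_sig_set_Suc:
  "multi_sig_set Ws bs ns (Suc l) = (\<lambda>(s, t). s @ [t]) `
     (SIGMA s:multi_sig_set Ws bs ns l. next_sig Ws bs ns l ` sig_region Ws bs ns l s)"
    (is "_ = ?snoc ` ?pairs")
proof (intro equalityI subsetI)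
  fix u assume "u \<in> multi_sig_set Ws bs ns (Suc l)"
  then obtain x where x: "x \<in> Rn (ns 0)" and u: "u = multi_sig Ws bs ns (Suc l) x"
    by (auto simp: multi_sig_set_def)
  have "(multi_sig Ws bs ns l x, next_sig Ws bs ns l x) \<in> ?pairs"
    using x by (auto simp: multi_sig_set_def sig_region_def)
  then show "u \<in> ?snoc ` ?pairs"
    unfolding u multi_sig_Suc by force
next
  fix u assume "u \<in> ?snoc ` ?pairs"
  then obtain s x where "x \<in> sig_region Ws bs ns l s" and "u = s @ [next_sig Ws bs ns l x]"
    by auto
  then have "x \<in> Rn (ns 0)" and "u = multi_sig Ws bs ns (Suc l) x"
    by (simp_all add: sig_region_def multi_sig_Suc)
  then show "u \<in> multi_sig_set Ws bs ns (Suc l)"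
    by (simp add: multi_sig_set_def)
qed

lemma finite_next_sig_image: "finite (next_sig Ws bs ns l ` X)"
  using finite_signature_image by (simp add: next_sig_def image_image[symmetric])

lemma finite_multi_sig_set: "finite (multi_sig_set Ws bs ns l)"
  by (induction l) (simp_all add: multi_sig_set_0 multi_sig_set_Suc finite_next_sig_image)

lemma card_snoc_image_filter:
  assumes "finite S" "\<forall>s\<in>S. finite (C s)"
  shows "card {u \<in> (\<lambda>(s, t). s @ [t]) ` Sigma S C. P u} = (\<Sum>s\<in>S. card {t \<in> C s. P (s @ [t])})"
proof -
  have "{u \<in> (\<lambda>(s, t). s @ [t]) ` Sigma S C. P u}
      = (\<lambda>(s, t). s @ [t]) ` (SIGMA s:S. {t \<in> C s. P (s @ [t])})"
    by fast
  moreover have "inj_on (\<lambda>(s, t). s @ [t]) X" for X :: "('a list \<times> 'a) set"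
    by (rule inj_onI) auto
  ultimately show ?thesis
    using assms by (simp add: card_image)
qed

lemma is_hist_trans_iter: "is_hist (trans_iter \<gamma> ns l)"
proof (cases l)
  case 0
  then show ?thesis by (intro is_histI[of "ns 0"]) (simp add: unit_hist_def)
next
  case (Suc k)
  then show ?thesis by (intro is_histI[of "ns l"]) (simp add: trans_map_eq_0)
qed

lemma mono_tail_clip_Gamma:
  assumes "in_Gamma \<gamma>" "1 \<le> N"
  shows "mono (\<lambda>k. tail (clip (min k N) (\<gamma> (min k N) N)) J)"
proof (rule monoI)
  fix k k' :: nat assume "k \<le> k'"
  then have "min k N \<le> min k' N" by simp
  then have "hist_le (\<gamma> (min k N) N) (\<gamma> (min k' N) N)"
    using assms by (simp add: in_Gamma_def)
  then show "tail (clip (min k N) (\<gamma> (min k N) N)) J \<le> tail (clip (min k' N) (\<gamma> (min k' N) N)) J"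
    using \<open>k \<le> k'\<close> by (auto simp: tail_clip_Gamma[OF assms] hist_le_def)
qed

lemma card_multi_sig_set_region_dim_le:
  assumes "in_Gamma \<gamma>" "\<forall>l\<le>L. 1 \<le> ns l" "l \<le> L"
  shows "card {s \<in> multi_sig_set Ws bs ns l. J \<le> region_dim (ns 0) s} \<le> tail (trans_iter \<gamma> ns l) J"
  using assms(3)
proof (induction l arbitrary: J)
  case 0
  have "{s \<in> multi_sig_set Ws bs ns 0. J \<le> region_dim (ns 0) s} = (if J \<le> ns 0 then {[]} else {})"
    by (auto simp: multi_sig_set_0)
  then show ?case
    by (simp add: tail_unit_hist)
next
  case (Suc l)
  let ?S = "multi_sig_set Ws bs ns l"
  let ?C = "\<lambda>s. next_sig Ws bs ns l ` sig_region Ws bs ns l s"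
  let ?v = "trans_iter \<gamma> ns l"
  let ?N = "ns (Suc l)"
  let ?g = "\<lambda>k. tail (clip (min k ?N) (\<gamma> (min k ?N) ?N)) J"
  have N: "1 \<le> ?N" using assms(2) Suc.prems by simp
  have "card {s \<in> multi_sig_set Ws bs ns (Suc l). J \<le> region_dim (ns 0) s}
      = (\<Sum>s\<in>?S. card {t \<in> ?C s. J \<le> min (region_dim (ns 0) s) (length (filter id t))})"
    unfolding multi_sig_set_Suc
    by (simp add: card_snoc_image_filter finite_multi_sig_set finite_next_sig_image)
  also have "\<dots> \<le> (\<Sum>s\<in>?S. ?g (region_dim (ns 0) s))"
    using card_signature_image_le_tail_clip[OF assms(1) N affine_dim_le_sig_region]
    by (intro sum_mono) (simp add: next_sig_def image_image)
  also have "\<dots> \<le> (\<Sum>k | ?v k \<noteq> 0. ?v k * ?g k)"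
    using Suc finite_multi_sig_set is_hist_trans_iter mono_tail_clip_Gamma[OF assms(1) N]
    by (intro sum_mono_comp_le_of_tail_le) simp_all
  also have "\<dots> = tail (trans_iter \<gamma> ns (Suc l)) J"
    by (simp add: tail_trans_map is_hist_trans_iter)
  finally show ?case .
qed

theorem mainTheorem1:
  fixes Ws :: "nat \<Rightarrow> nat \<Rightarrow> nat \<Rightarrow> real" and bs :: "nat \<Rightarrow> nat \<Rightarrow> real"
    and ns :: "nat \<Rightarrow> nat" and L :: nat and \<gamma> :: "nat \<Rightarrow> nat \<Rightarrow> nat \<Rightarrow> nat"
  assumes "1 \<le> L"
    and "\<forall>l\<le>L. 1 \<le> ns l"
    and "in_Gamma \<gamma>"
  shows "card (multi_sig_set Ws bs ns L) \<le> norm1 (trans_iter \<gamma> ns L)"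
  using card_multi_sig_set_region_dim_le[OF assms(3,2) order_refl, of Ws bs 0]
  by (simp add: norm1_eq_tail_0)

end
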